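(* Let $q_1,q_2\in\mathbb{Z}$, $X$ a nonempty finite set and $f\in\mathrm{Bool}(X)$. There exists an ordered sequence $(X_1,\ldots,X_k)$ of nonempty pairwise disjoint subsets of $X$ with union $X$ such that each $f_{\mid X_i}$ is $(q_1,q_2)$-indecomposable and $f=f_{\mid X_1}\star_{q_1,q_2}\cdots\star_{q_1,q_2}f_{\mid X_k}$. Moreover, if $(Y_1,\ldots,Y_l)$ is another such sequence with the same two properties, then $k=l$ and there exists a permutation $\sigma$ of $\{1,\ldots,k\}$ with $Y_i=X_{\sigma(i)}$ for all $i$.
   Context: For a finite set $X$, a boolean function on $X$ is a map $f:\mathcal{P}(X)\to\mathbb{Z}$ with $f(\emptyset)=0$; $\mathrm{Bool}(X)$ is the set of these. Throughout, $0^0=1$. For disjoint finite sets $X,Y$, $f\in\mathrm{Bool}(X)$, $g\in\mathrm{Bool}(Y)$, $(f\star_{q_1,q_2}g)(A)=q_1^{|A\cap Y|}f(A\cap X)+q_2^{|A\cap X|}g(A\cap Y)$ for $A\subseteq X\sqcup Y$; this product is associative. For $Y\subseteq X$, $f_{\mid Y}\in\mathrm{Bool}(Y)$ denotes the restriction of $f$ to $\mathcal{P}(Y)$. For $X$ nonempty, $f\in\mathrm{Bool}(X)$ is $(q_1,q_2)$-indecomposable if whenever $Y\subseteq X$, $f'\in\mathrm{Bool}(X\setminus Y)$, $f''\in\mathrm{Bool}(Y)$ and $f=f'\star_{q_1,q_2}f''$, then $Y=\emptyset$ or $Y=X$. *)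

theory Defs
  imports Main
begin

text \<open>Boolean functions on a finite set X are represented as functions
  'a set => int that vanish on the empty set and outside the powerset of X
  (extensional representation, so that equality of boolean functions is
  equality of HOL functions).\<close>

definition Bool :: "'a set \<Rightarrow> ('a set \<Rightarrow> int) set" where
  "Bool X = {f. f {} = 0 \<and> (\<forall>A. \<not> A \<subseteq> X \<longrightarrow> f A = 0)}"

definition restr :: "('a set \<Rightarrow> int) \<Rightarrow> 'a set \<Rightarrow> ('a set \<Rightarrow> int)" where
  "restr f Y = (\<lambda>A. if A \<subseteq> Y then f A else 0)"

text \<open>The product of f in Bool X and g in Bool Y (X, Y disjoint).
  Note Isabelle has 0 ^ 0 = 1.\<close>
definition star :: "int \<Rightarrow> int \<Rightarrow> 'a set \<Rightarrow> 'a set \<Rightarrow> ('a set \<Rightarrow> int) \<Rightarrow> ('a set \<Rightarrow> int)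
    \<Rightarrow> ('a set \<Rightarrow> int)" where
  "star q1 q2 X Y f g = (\<lambda>A. if A \<subseteq> X \<union> Y
      then q1 ^ card (A \<inter> Y) * f (A \<inter> X) + q2 ^ card (A \<inter> X) * g (A \<inter> Y)
      else 0)"

definition indecomposable :: "int \<Rightarrow> int \<Rightarrow> 'a set \<Rightarrow> ('a set \<Rightarrow> int) \<Rightarrow> bool" where
  "indecomposable q1 q2 X f \<longleftrightarrow> X \<noteq> {} \<and>
     (\<forall>Y f' f''. Y \<subseteq> X \<and> f' \<in> Bool (X - Y) \<and> f'' \<in> Bool Y \<and>
        f = star q1 q2 (X - Y) Y f' f'' \<longrightarrow> Y = {} \<or> Y = X)"

text \<open>Iterated product f|X1 * (f|X2 * ( ... * f|Xk)) (the product is associative);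
  the empty product is the zero function, the unique element of Bool {}.\<close>
fun prodseq :: "int \<Rightarrow> int \<Rightarrow> ('a set \<Rightarrow> int) \<Rightarrow> 'a set list \<Rightarrow> ('a set \<Rightarrow> int)" where
  "prodseq q1 q2 f [] = (\<lambda>A. 0)"
| "prodseq q1 q2 f (Xi # Xs) = star q1 q2 Xi (\<Union> (set Xs)) (restr f Xi) (prodseq q1 q2 f Xs)"

definition good_decomp :: "int \<Rightarrow> int \<Rightarrow> 'a set \<Rightarrow> ('a set \<Rightarrow> int) \<Rightarrow> 'a set list \<Rightarrow> bool" where
  "good_decomp q1 q2 X f Xs \<longleftrightarrow>
     (\<forall>i<length Xs. Xs ! i \<noteq> {} \<and> Xs ! i \<subseteq> X) \<and>
     (\<forall>i<length Xs. \<forall>j<length Xs. i \<noteq> j \<longrightarrow> Xs ! i \<inter> Xs ! j = {}) \<and>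
     \<Union> (set Xs) = X \<and>
     (\<forall>i<length Xs. indecomposable q1 q2 (Xs ! i) (restr f (Xs ! i))) \<and>
     f = prodseq q1 q2 f Xs"

end

theory Submission
  imports Defs "HOL-Combinatorics.Permutations"
begin

text \<open>Existence is by strong induction on X: if f is decomposable, f = f|(X-Y) * f|Y,
  decompose both factors and concatenate, using associativity of the product.
  For uniqueness, restricting a factorization f|(Z \<union> U) = f|Z * f|U to a block B of another
  decomposition gives f|B = f|(B \<inter> Z) * f|(B \<inter> U); as f|B is indecomposable, B lies in Z or
  in U. Hence every block of one decomposition lies in a block of the other, so by disjointness
  both have the same blocks, and two repetition-free lists with the same elements differ by a
  permutation.\<close>

abbreviation disjoint_list :: "'a set list \<Rightarrow> bool" where
  "disjoint_list \<equiv> sorted_wrt (\<lambda>A B. A \<inter> B = {})"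

lemma disjoint_list_iff_nth:
  "disjoint_list Xs \<longleftrightarrow> (\<forall>i<length Xs. \<forall>j<length Xs. i \<noteq> j \<longrightarrow> Xs ! i \<inter> Xs ! j = {})"
  unfolding sorted_wrt_iff_nth_less
proof (intro iffI allI impI)
  fix i j
  assume disj: "\<forall>i j. i < j \<longrightarrow> j < length Xs \<longrightarrow> Xs ! i \<inter> Xs ! j = {}"
    and "i < length Xs" "j < length Xs" "i \<noteq> j"
  then consider "i < j" "j < length Xs" | "j < i" "i < length Xs"
    by linarith
  then show "Xs ! i \<inter> Xs ! j = {}"
    by cases (use disj in \<open>auto simp: Int_commute\<close>)
qed auto

lemma disjoint_list_eqI:
  "disjoint_list Xs \<Longrightarrow> A \<in> set Xs \<Longrightarrow> B \<in> set Xs \<Longrightarrow> A \<inter> B \<noteq> {} \<Longrightarrow> A = B"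
  by (induction Xs) auto

lemma distinct_if_disjoint_list: "disjoint_list Xs \<Longrightarrow> {} \<notin> set Xs \<Longrightarrow> distinct Xs"
  by (induction Xs) auto

lemma restr_in_Bool: "f {} = 0 \<Longrightarrow> restr f Y \<in> Bool Y"
  by (auto simp: Bool_def restr_def)

lemma restr_restr: "Z \<subseteq> Y \<Longrightarrow> restr (restr f Y) Z = restr f Z"
  by (auto simp: restr_def fun_eq_iff)

lemma restr_Bool_self: "f \<in> Bool X \<Longrightarrow> restr f X = f"
  by (auto simp: Bool_def restr_def fun_eq_iff)

lemma star_in_Bool: "g \<in> Bool S \<Longrightarrow> h \<in> Bool T \<Longrightarrow> star q1 q2 S T g h \<in> Bool (S \<union> T)"
  by (simp add: Bool_def star_def)

lemma
  assumes "g \<in> Bool S" "h \<in> Bool T" "S \<inter> T = {}"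
  shows restr_star_left: "restr (star q1 q2 S T g h) S = g"
    and restr_star_right: "restr (star q1 q2 S T g h) T = h"
proof -
  have "A \<inter> T = {}" "A \<inter> S = A" if "A \<subseteq> S" for A
    using that assms(3) by auto
  moreover have "A \<inter> S = {}" "A \<inter> T = A" if "A \<subseteq> T" for A
    using that assms(3) by auto
  ultimately show "restr (star q1 q2 S T g h) S = g" "restr (star q1 q2 S T g h) T = h"
    using assms(1,2) by (auto simp: Bool_def star_def restr_def fun_eq_iff)
qed

lemma star_assoc:
  assumes "finite X" "finite Y" "finite Z" "X \<inter> Y = {}" "X \<inter> Z = {}" "Y \<inter> Z = {}"
  shows "star q1 q2 X (Y \<union> Z) a (star q1 q2 Y Z b c) = star q1 q2 (X \<union> Y) Z (star q1 q2 X Y a b) c"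
proof
  fix A
  show "star q1 q2 X (Y \<union> Z) a (star q1 q2 Y Z b c) A = star q1 q2 (X \<union> Y) Z (star q1 q2 X Y a b) c A"
  proof (cases "A \<subseteq> X \<union> Y \<union> Z")
    case True
    have "card (A \<inter> (Y \<union> Z)) = card (A \<inter> Y) + card (A \<inter> Z)"
         "card (A \<inter> (X \<union> Y)) = card (A \<inter> X) + card (A \<inter> Y)"
      using assms by (auto simp: Int_Un_distrib intro!: card_Un_disjoint)
    moreover have "A \<inter> (Y \<union> Z) \<inter> Y = A \<inter> Y" "A \<inter> (Y \<union> Z) \<inter> Z = A \<inter> Z"
      "A \<inter> (X \<union> Y) \<inter> X = A \<inter> X" "A \<inter> (X \<union> Y) \<inter> Y = A \<inter> Y" using assms by auto
    ultimately show ?thesis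
      using True by (simp add: star_def power_add algebra_simps Un_assoc)
  next
    case False
    then show ?thesis by (auto simp: star_def)
  qed
qed

lemma prodseq_in_Bool:
  assumes "f {} = 0"
  shows "prodseq q1 q2 f Xs \<in> Bool (\<Union>(set Xs))"
proof (induction Xs)
  case Nil
  then show ?case by (simp add: Bool_def)
next
  case (Cons Z Xs)
  then show ?case using star_in_Bool[OF restr_in_Bool[where f=f, OF assms] Cons.IH] by simp
qed

lemma prodseq_singleton: "f {} = 0 \<Longrightarrow> prodseq q1 q2 f [Z] = restr f Z"
  by (auto simp: star_def restr_def fun_eq_iff Int_absorb2)

lemma prodseq_append:
  assumes "f {} = 0" "disjoint_list Xs" "\<Union>(set Xs) \<inter> \<Union>(set Ys) = {}"
    "\<forall>Z\<in>set (Xs @ Ys). finite Z"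
  shows "prodseq q1 q2 f (Xs @ Ys) =
    star q1 q2 (\<Union>(set Xs)) (\<Union>(set Ys)) (prodseq q1 q2 f Xs) (prodseq q1 q2 f Ys)"
  using assms(2-)
proof (induction Xs)
  case Nil
  then show ?case
    using prodseq_in_Bool[where f=f and Xs=Ys, OF assms(1)]
    by (auto simp: Bool_def star_def fun_eq_iff Int_absorb2)
next
  case (Cons Z Xs)
  have IH: "prodseq q1 q2 f (Xs @ Ys) =
      star q1 q2 (\<Union>(set Xs)) (\<Union>(set Ys)) (prodseq q1 q2 f Xs) (prodseq q1 q2 f Ys)"
    by (rule Cons.IH) (use Cons.prems in auto)
  have "finite Z" "finite (\<Union>(set Xs))" "finite (\<Union>(set Ys))"
    "Z \<inter> \<Union>(set Xs) = {}" "Z \<inter> \<Union>(set Ys) = {}" "\<Union>(set Xs) \<inter> \<Union>(set Ys) = {}"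
    using Cons.prems by auto
  then have "star q1 q2 Z (\<Union>(set Xs) \<union> \<Union>(set Ys)) (restr f Z) (prodseq q1 q2 f (Xs @ Ys)) =
      star q1 q2 (Z \<union> \<Union>(set Xs)) (\<Union>(set Ys))
        (star q1 q2 Z (\<Union>(set Xs)) (restr f Z) (prodseq q1 q2 f Xs)) (prodseq q1 q2 f Ys)"
    unfolding IH by (rule star_assoc)
  then show ?case
    by (simp only: append_Cons prodseq.simps set_append Union_Un_distrib list.set Union_insert)
qed

lemma indecomposable_nonempty: "indecomposable q1 q2 X f \<Longrightarrow> X \<noteq> {}"
  by (simp add: indecomposable_def)

definition splits :: "int \<Rightarrow> int \<Rightarrow> ('a set \<Rightarrow> int) \<Rightarrow> 'a set \<Rightarrow> 'a set \<Rightarrow> bool" where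
  "splits q1 q2 f S T \<longleftrightarrow> restr f (S \<union> T) = star q1 q2 S T (restr f S) (restr f T)"

lemma splits_Int:
  assumes "splits q1 q2 f S T"
  shows "splits q1 q2 f (B \<inter> S) (B \<inter> T)"
  unfolding splits_def
proof
  fix A
  show "restr f (B \<inter> S \<union> B \<inter> T) A =
      star q1 q2 (B \<inter> S) (B \<inter> T) (restr f (B \<inter> S)) (restr f (B \<inter> T)) A"
  proof (cases "A \<subseteq> B \<inter> S \<union> B \<inter> T")
    case True
    then have "A \<subseteq> S \<union> T" "A \<inter> (B \<inter> S) = A \<inter> S" "A \<inter> (B \<inter> T) = A \<inter> T"
      "A \<inter> S \<subseteq> B \<inter> S" "A \<inter> T \<subseteq> B \<inter> T"
      by auto
    with True show ?thesis
      using fun_cong[OF assms[unfolded splits_def], of A] by (simp add: restr_def star_def)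
  next
    case False
    then show ?thesis by (simp add: restr_def star_def)
  qed
qed

lemma indecomposable_restr_iff:
  assumes "f {} = 0"
  shows "indecomposable q1 q2 B (restr f B) \<longleftrightarrow>
    B \<noteq> {} \<and> (\<forall>Y\<subseteq>B. splits q1 q2 f (B - Y) Y \<longrightarrow> Y = {} \<or> Y = B)"
proof -
  have "(\<exists>g\<in>Bool (B - Y). \<exists>h\<in>Bool Y. restr f B = star q1 q2 (B - Y) Y g h) \<longleftrightarrow>
      splits q1 q2 f (B - Y) Y" if Y: "Y \<subseteq> B" for Y
  proof -
    have B: "B - Y \<union> Y = B"
      using Y by blast
    have "restr f (B - Y) = g \<and> restr f Y = h"
      if "g \<in> Bool (B - Y)" "h \<in> Bool Y" "restr f B = star q1 q2 (B - Y) Y g h" for g h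
    proof -
      have "(B - Y) \<inter> Y = {}"
        by blast
      then have "restr (restr f B) (B - Y) = g" "restr (restr f B) Y = h"
        unfolding that(3) by (simp_all add: restr_star_left restr_star_right that(1,2))
      then show ?thesis
        using Y by (simp add: restr_restr)
    qed
    then show ?thesis
      unfolding splits_def B using restr_in_Bool[where f=f, OF assms] by blast
  qed
  then show ?thesis
    unfolding indecomposable_def by blast
qed

lemma restr_eq_prodseq_Cons_iff:
  assumes "f {} = 0" "Z \<inter> \<Union>(set Zs) = {}"
  shows "restr f (\<Union>(set (Z # Zs))) = prodseq q1 q2 f (Z # Zs) \<longleftrightarrow>
    splits q1 q2 f Z (\<Union>(set Zs)) \<and> restr f (\<Union>(set Zs)) = prodseq q1 q2 f Zs"
proof
  assume eq: "restr f (\<Union>(set (Z # Zs))) = prodseq q1 q2 f (Z # Zs)"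
  have "restr f (\<Union>(set Zs)) = restr (restr f (\<Union>(set (Z # Zs)))) (\<Union>(set Zs))"
    by (simp add: restr_restr)
  also have "\<dots> = prodseq q1 q2 f Zs"
    unfolding eq using restr_star_right[OF restr_in_Bool[where f=f, OF assms(1)]
        prodseq_in_Bool[where f=f, OF assms(1)] assms(2)]
    by simp
  finally have tail: "restr f (\<Union>(set Zs)) = prodseq q1 q2 f Zs" .
  with eq show "splits q1 q2 f Z (\<Union>(set Zs)) \<and> restr f (\<Union>(set Zs)) = prodseq q1 q2 f Zs"
    by (simp add: splits_def)
next
  assume "splits q1 q2 f Z (\<Union>(set Zs)) \<and> restr f (\<Union>(set Zs)) = prodseq q1 q2 f Zs"
  then show "restr f (\<Union>(set (Z # Zs))) = prodseq q1 q2 f (Z # Zs)"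
    by (simp add: splits_def)
qed

lemma indecomposable_subset_factor:
  assumes "f {} = 0" "disjoint_list Xs" "restr f (\<Union>(set Xs)) = prodseq q1 q2 f Xs"
    "B \<subseteq> \<Union>(set Xs)" "indecomposable q1 q2 B (restr f B)"
  shows "\<exists>Z\<in>set Xs. B \<subseteq> Z"
  using assms(2-4)
proof (induction Xs)
  case Nil
  then show ?case
    using indecomposable_nonempty[OF assms(5)] by simp
next
  case (Cons Z Zs)
  let ?U = "\<Union>(set Zs)"
  have disj: "Z \<inter> ?U = {}"
    using Cons.prems(1) by auto
  with Cons.prems(2) have split: "splits q1 q2 f Z ?U" and tail: "restr f ?U = prodseq q1 q2 f Zs"
    using restr_eq_prodseq_Cons_iff[where f=f, OF assms(1) disj] by blast+
  have "B \<inter> Z = B - B \<inter> ?U"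
    using Cons.prems(3) disj by auto
  with splits_Int[OF split, of B] have "splits q1 q2 f (B - B \<inter> ?U) (B \<inter> ?U)"
    by simp
  moreover have "\<forall>Y\<subseteq>B. splits q1 q2 f (B - Y) Y \<longrightarrow> Y = {} \<or> Y = B"
    using assms(5) indecomposable_restr_iff[where f=f, OF assms(1)] by blast
  ultimately consider "B \<inter> ?U = {}" | "B \<inter> ?U = B"
    by blast
  then show ?case
  proof cases
    case 1
    then have "B \<subseteq> Z"
      using Cons.prems(3) by auto
    then show ?thesis by simp
  next
    case 2
    then have "B \<subseteq> ?U"
      by blast
    with Cons.IH Cons.prems(1) tail show ?thesis
      by auto
  qed
qed

definition indecomposable_factorization ::
    "int \<Rightarrow> int \<Rightarrow> ('a set \<Rightarrow> int) \<Rightarrow> 'a set list \<Rightarrow> bool" where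
  "indecomposable_factorization q1 q2 f Xs \<longleftrightarrow>
     disjoint_list Xs \<and> (\<forall>Z\<in>set Xs. indecomposable q1 q2 Z (restr f Z)) \<and>
     restr f (\<Union>(set Xs)) = prodseq q1 q2 f Xs"

lemma good_decomp_iff_indecomposable_factorization:
  assumes "f \<in> Bool X"
  shows "good_decomp q1 q2 X f Xs \<longleftrightarrow>
    \<Union>(set Xs) = X \<and> indecomposable_factorization q1 q2 f Xs"
  unfolding good_decomp_def indecomposable_factorization_def disjoint_list_iff_nth
  using restr_Bool_self[OF assms]
  by (auto simp: all_set_conv_all_nth dest: indecomposable_nonempty)

lemma indecomposable_factorization_exists:
  assumes "f {} = 0" "finite B"
  shows "\<exists>Xs. \<Union>(set Xs) = B \<and> indecomposable_factorization q1 q2 f Xs"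
  using assms(2)
proof (induction B rule: finite_psubset_induct)
  case (psubset B)
  consider "B = {}" | "indecomposable q1 q2 B (restr f B)"
    | Y where "Y \<subseteq> B" "Y \<noteq> {}" "Y \<noteq> B" "splits q1 q2 f (B - Y) Y"
    unfolding indecomposable_restr_iff[where f=f, OF assms(1)] by blast
  then show ?case
  proof cases
    case 1
    then have "indecomposable_factorization q1 q2 f []"
      by (simp add: indecomposable_factorization_def restr_def fun_eq_iff assms(1))
    with 1 show ?thesis
      by (intro exI[of _ "[]"]) simp
  next
    case 2
    then have "indecomposable_factorization q1 q2 f [B]"
      unfolding indecomposable_factorization_def prodseq_singleton[where f=f, OF assms(1)] by simp
    then show ?thesis
      by (intro exI[of _ "[B]"]) simp
  next
    case 3
    have "B - Y \<subset> B" "Y \<subset> B"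
      using 3(1-3) by blast+
    then obtain Xs Ys where Xs: "\<Union>(set Xs) = B - Y" "indecomposable_factorization q1 q2 f Xs"
      and Ys: "\<Union>(set Ys) = Y" "indecomposable_factorization q1 q2 f Ys"
      using psubset.IH by (metis (no_types))
    have "Z \<inter> Z' = {}" if "Z \<in> set Xs" "Z' \<in> set Ys" for Z Z'
      using Union_upper[OF that(1)] Union_upper[OF that(2)] Xs(1) Ys(1) by blast
    then have disj: "disjoint_list (Xs @ Ys)"
      using Xs(2) Ys(2) by (simp add: indecomposable_factorization_def sorted_wrt_append)
    have "\<forall>Z\<in>set (Xs @ Ys). Z \<subseteq> B"
      using Xs(1) Ys(1) 3(1) by auto
    then have "\<forall>Z\<in>set (Xs @ Ys). finite Z"
      using psubset.hyps finite_subset by blast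
    then have "prodseq q1 q2 f (Xs @ Ys) =
        star q1 q2 (B - Y) Y (prodseq q1 q2 f Xs) (prodseq q1 q2 f Ys)"
      using prodseq_append[where f=f, OF assms(1)] disj Xs(1) Ys(1)
      by (simp add: sorted_wrt_append Diff_disjoint Int_commute)
    also have "\<dots> = star q1 q2 (B - Y) Y (restr f (B - Y)) (restr f Y)"
      using Xs Ys by (simp add: indecomposable_factorization_def)
    also have "\<dots> = restr f B"
      using 3(1,4) by (simp add: splits_def Un_absorb2)
    finally have "indecomposable_factorization q1 q2 f (Xs @ Ys)"
      using disj Xs Ys 3(1) by (simp add: indecomposable_factorization_def Un_absorb2 ball_Un)
    with Xs(1) Ys(1) 3(1) show ?thesis
      by (intro exI[of _ "Xs @ Ys"]) auto
  qed
qed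

lemma indecomposable_factorization_unique:
  assumes "f {} = 0"
    and "indecomposable_factorization q1 q2 f Xs" "indecomposable_factorization q1 q2 f Ys"
    and "\<Union>(set Xs) = \<Union>(set Ys)"
  shows "set Xs = set Ys"
proof -
  have "set Ys \<subseteq> set Xs"
    if Xs: "indecomposable_factorization q1 q2 f Xs" and Ys: "indecomposable_factorization q1 q2 f Ys"
      and "\<Union>(set Xs) = \<Union>(set Ys)" for Xs Ys
  proof
    fix B
    assume B: "B \<in> set Ys"
    obtain Z where Z: "Z \<in> set Xs" "B \<subseteq> Z"
      using indecomposable_subset_factor[where f=f, OF assms(1), of Xs q1 q2 B] Xs Ys B
        \<open>\<Union>(set Xs) = \<Union>(set Ys)\<close>
      by (auto simp: indecomposable_factorization_def)
    obtain B' where B': "B' \<in> set Ys" "Z \<subseteq> B'"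
      using indecomposable_subset_factor[where f=f, OF assms(1), of Ys q1 q2 Z] Xs Ys Z(1)
        \<open>\<Union>(set Xs) = \<Union>(set Ys)\<close>
      by (auto simp: indecomposable_factorization_def)
    have "B \<noteq> {}"
      using B Ys by (auto simp: indecomposable_factorization_def dest: indecomposable_nonempty)
    with Z(2) B'(2) have "B \<inter> B' \<noteq> {}"
      by blast
    then have "B = B'"
      using disjoint_list_eqI B B'(1) Ys by (auto simp: indecomposable_factorization_def)
    with Z B'(2) show "B \<in> set Xs"
      by auto
  qed
  with assms(2-4) show ?thesis
    by (metis subset_antisym)
qed

lemma indecomposable_factorization_distinct:
  "indecomposable_factorization q1 q2 f Xs \<Longrightarrow> distinct Xs"
  using distinct_if_disjoint_list
  by (auto simp: indecomposable_factorization_def dest: indecomposable_nonempty)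

lemma set_eq_distinct_reindex:
  assumes "distinct xs" "distinct ys" "set xs = set ys"
  shows "length ys = length xs \<and>
    (\<exists>\<sigma>. bij_betw \<sigma> {..<length xs} {..<length xs} \<and> (\<forall>i<length xs. ys ! i = xs ! \<sigma> i))"
proof -
  have "mset ys = mset xs"
    using assms set_eq_iff_mset_eq_distinct by metis
  then obtain p where p: "p permutes {..<length xs}" "permute_list p xs = ys"
    by (rule mset_eq_permutation)
  then show ?thesis
    using permutes_imp_bij[OF p(1)] permute_list_nth[OF p(1)] by auto
qed

theorem lemma2p7:
  fixes q1 q2 :: int and X :: "'a set" and f :: "'a set \<Rightarrow> int"
  assumes "finite X" and "X \<noteq> {}" and "f \<in> Bool X"
  shows "\<exists>Xs. good_decomp q1 q2 X f Xs \<and>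
           (\<forall>Ys. good_decomp q1 q2 X f Ys \<longrightarrow>
              length Ys = length Xs \<and>
              (\<exists>\<sigma>. bij_betw \<sigma> {..<length Xs} {..<length Xs} \<and>
                   (\<forall>i<length Xs. Ys ! i = Xs ! (\<sigma> i))))"
proof -
  have f0: "f {} = 0"
    using assms(3) by (simp add: Bool_def)
  obtain Xs where Xs: "\<Union>(set Xs) = X" "indecomposable_factorization q1 q2 f Xs"
    using indecomposable_factorization_exists[where f=f, OF f0 assms(1)] by blast
  have "good_decomp q1 q2 X f Xs"
    using Xs good_decomp_iff_indecomposable_factorization[OF assms(3)] by blast
  moreover have "length Ys = length Xs \<and>
      (\<exists>\<sigma>. bij_betw \<sigma> {..<length Xs} {..<length Xs} \<and> (\<forall>i<length Xs. Ys ! i = Xs ! \<sigma> i))"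
    if "good_decomp q1 q2 X f Ys" for Ys
  proof -
    from that have Ys: "\<Union>(set Ys) = X" "indecomposable_factorization q1 q2 f Ys"
      using good_decomp_iff_indecomposable_factorization[OF assms(3)] by blast+
    have "set Xs = set Ys"
      using indecomposable_factorization_unique[OF f0 Xs(2) Ys(2)] Xs(1) Ys(1) by simp
    then show ?thesis
      using set_eq_distinct_reindex indecomposable_factorization_distinct Xs(2) Ys(2) by blast
  qed
  ultimately show ?thesis
    by blast
qed

end
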